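(* Let $q=[\alpha:\beta:\gamma]\in\mathcal C_0$ with $\beta\neq\gamma$ (i.e. $q\notin\mathcal H_0$), let $\mathcal H_q=\{\alpha x+\beta y-2\gamma z=0\}$ be the tangent line to $\mathcal C_0$ at $q$, and $$\mathcal C_q^{(4,1,1)}=\{(\beta-2\gamma)^2x^2+(3\beta^2-4\beta\gamma+2\gamma^2)y^2+2\alpha\beta xy-4\alpha\gamma xz-4\beta\gamma yz+4\beta(2\gamma-\beta)z^2=0\}.$$ Then the conics $Q\subset\mathbb P^2(\mathbb C)$ (possibly reducible or non-reduced) such that $Q\cap\mathcal C_0=\{q\}$ set-theoretically and $Q$ meets $\mathcal H_0$ in a single point without containing it, are exactly $2\mathcal H_q$ and $\mathcal C_q^{(4,1,1)}$; they meet $\mathcal H_0$ at $[2\gamma-\beta:\alpha:\alpha]$ and $[\alpha:2\gamma-\beta:2\gamma-\beta]$ respectively.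
   Context: In $\mathbb P^2(\mathbb C)$ with coordinates $[x:y:z]$: $\mathcal C_0=\{x^2+y^2-2z^2=0\}$ (a smooth conic) and $\mathcal H_0=\{y-z=0\}$ (a line). For a plane curve given by $f=0$ with $f$ a square of a linear form $\ell$, $2\{\ell=0\}$ denotes the double line. *)

theory Defs
  imports Complex_Main
begin

text \<open>Points of P^2(C) are represented by nonzero homogeneous coordinate triples (x,y,z);
 a conic by the nonzero coefficient vector (a,b,c,d,e,f) of the ternary quadratic form
 a x^2 + b y^2 + c z^2 + d x y + e x z + f y z, up to nonzero scalar multiples;
 a line by the coefficient triple of a linear form.\<close>

type_synonym pt = "complex \<times> complex \<times> complex"
type_synonym conic = "complex \<times> complex \<times> complex \<times> complex \<times> complex \<times> complex"

definition qform :: "conic \<Rightarrow> pt \<Rightarrow> complex" where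
  "qform Q p = (case Q of (a,b,c,d,e,f) \<Rightarrow> case p of (x,y,z) \<Rightarrow>
     a*x^2 + b*y^2 + c*z^2 + d*x*y + e*x*z + f*y*z)"

definition lform :: "pt \<Rightarrow> pt \<Rightarrow> complex" where
  "lform L p = (case L of (a,b,c) \<Rightarrow> case p of (x,y,z) \<Rightarrow> a*x + b*y + c*z)"

definition pt_eq :: "pt \<Rightarrow> pt \<Rightarrow> bool" where
  "pt_eq p p' = (\<exists>t::complex. t \<noteq> 0 \<and>
     (case p of (x,y,z) \<Rightarrow> p' = (t*x, t*y, t*z)))"

definition conic_eq :: "conic \<Rightarrow> conic \<Rightarrow> bool" where
  "conic_eq Q Q' = (\<exists>t::complex. t \<noteq> 0 \<and>
     (case Q of (a,b,c,d,e,f) \<Rightarrow> Q' = (t*a, t*b, t*c, t*d, t*e, t*f)))"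

definition C0 :: conic where "C0 = (1, 1, -2, 0, 0, 0)"
definition H0 :: pt where "H0 = (0, 1, -1)"               \<comment> \<open>y - z\<close>

definition meets_C0_only_at :: "conic \<Rightarrow> pt \<Rightarrow> bool" where
  "meets_C0_only_at Q q = (\<forall>p. p \<noteq> (0,0,0) \<longrightarrow>
      ((qform Q p = 0 \<and> qform C0 p = 0) \<longleftrightarrow> pt_eq q p))"

definition meets_H0_exactly_at :: "conic \<Rightarrow> pt \<Rightarrow> bool" where
  "meets_H0_exactly_at Q r = (r \<noteq> (0,0,0) \<and> (\<forall>p. p \<noteq> (0,0,0) \<longrightarrow>
      ((qform Q p = 0 \<and> lform H0 p = 0) \<longleftrightarrow> pt_eq r p)))"

definition contains_H0 :: "conic \<Rightarrow> bool" where
  "contains_H0 Q = (\<forall>p. lform H0 p = 0 \<longrightarrow> qform Q p = 0)"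

end

(*
  Parametrize C0 by (a:b) \<mapsto> ((2a^2+b^2)/2 : -i(2a^2-b^2)/2 : ab). A conic Q meeting C0 only at
  q = (a0:b0) pulls back to a binary quartic whose only root is (a0:b0); by the fundamental theorem
  of algebra it is a multiple of (b0 a - a0 b)^4, which is also the pull-back of the double tangent
  2H_q. Hence Q - m 2H_q vanishes on C0, i.e. Q = l C0 + m 2H_q. Restricted to H0 this pencil is a
  binary quadratic with discriminant proportional to l (l - 2m(\<beta>-\<gamma>)^2), and Q meets H0 in a single
  point exactly when it vanishes: l = 0 gives 2H_q and l = 2m(\<beta>-\<gamma>)^2 gives C_q^(4,1,1).
*)
theory Submission
  imports Defs "HOL-Computational_Algebra.Fundamental_Theorem_Algebra"
begin

lemma qform_C0 [simp]: "qform C0 (x, y, z) = x^2 + y^2 - 2*z^2"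
  by (simp add: qform_def C0_def)

lemma lform_H0 [simp]: "lform H0 (x, y, z) = y - z"
  by (simp add: lform_def H0_def)

lemma qform_scale: "qform Q (k*x, k*y, k*z) = k^2 * qform Q (x, y, z)"
  unfolding qform_def by (cases Q) (simp add: power2_eq_square algebra_simps)

lemma lform_scale: "lform L (k*x, k*y, k*z) = k * lform L (x, y, z)"
  unfolding lform_def by (cases L) (simp add: algebra_simps)

lemma qform_smult: "qform (t*a, t*b, t*c, t*d, t*e, t*f) p = t * qform (a, b, c, d, e, f) p"
  unfolding qform_def by (cases p) (simp add: algebra_simps)

lemma qform_diff:
  "qform (a - a', b - b', c - c', d - d', e - e', f - f') p =
     qform (a, b, c, d, e, f) p - qform (a', b', c', d', e', f') p"
  unfolding qform_def by (cases p) (simp add: algebra_simps)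

lemma pt_eq_refl: "pt_eq p p"
  unfolding pt_eq_def by (cases p) (auto intro: exI[of _ 1])

lemma conic_eq_refl: "conic_eq Q Q"
  unfolding conic_eq_def by (cases Q) (auto intro: exI[of _ 1])

lemma proportional_pair:
  fixes a b a0 b0 :: complex
  assumes "(a0, b0) \<noteq> (0, 0)" and "a*b0 = a0*b"
  obtains \<sigma> where "a = \<sigma>*a0" and "b = \<sigma>*b0"
proof (cases "a0 = 0")
  case True
  then show ?thesis using assms that[of "b/b0"] by auto
next
  case False
  then show ?thesis using assms that[of "a/a0"] by (auto simp: field_simps)
qed

lemma binary_form_with_single_root:
  fixes g :: "complex \<Rightarrow> complex \<Rightarrow> complex"
  assumes hom: "\<And>k a b. g (k*a) (k*b) = k^n * g a b" and "n > 0"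
    and along_lines: "\<And>c d. \<exists>P. \<forall>u. poly P u = g (a0*u + c) (b0*u + d)"
    and roots: "\<And>a b. g a b = 0 \<Longrightarrow> (a, b) \<noteq> (0, 0) \<Longrightarrow> a*b0 = a0*b"
    and nz: "(a0, b0) \<noteq> (0, 0)" and root: "g a0 b0 = 0"
  shows "\<exists>e. \<forall>a b. g a b = e * (a0*b - b0*a)^n"
proof -
  obtain c d where "a0*d - b0*c \<noteq> 0"
    using nz by (cases "a0 = 0") (auto intro: that[of 0 1] that[of 1 0])
  define D where "D = a0*d - b0*c"
  have D: "D \<noteq> 0" using \<open>a0*d - b0*c \<noteq> 0\<close> D_def by simp
  obtain P where P: "\<And>u. poly P u = g (a0*u + c) (b0*u + d)" using along_lines by blast
  have "poly P u \<noteq> 0" for u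
  proof
    assume "poly P u = 0"
    have D_line: "D = a0*(b0*u + d) - b0*(a0*u + c)" unfolding D_def by (simp add: algebra_simps)
    then have "(a0*u + c, b0*u + d) \<noteq> (0, 0)" using D by auto
    then have "(a0*u + c)*b0 = a0*(b0*u + d)" using roots P \<open>poly P u = 0\<close> by metis
    then show False using D D_line by (simp add: mult.commute)
  qed
  then have "constant (poly P)" using fundamental_theorem_of_algebra by blast
  then have "poly P u = poly P 0" for u unfolding constant_def by blast
  then have const: "g (a0*u + c) (b0*u + d) = g c d" for u by (simp add: P)
  have "g a b = g c d / D^n * (a0*b - b0*a)^n" for a b
  proof -
    define s where "s = (a*d - b*c)/D"
    define t where "t = (a0*b - b0*a)/D"
    have "a0*(a*d - b*c) + c*(a0*b - b0*a) = a*D" "b0*(a*d - b*c) + d*(a0*b - b0*a) = b*D"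
      unfolding D_def by (simp_all add: algebra_simps)
    then have ab: "a = a0*s + c*t" "b = b0*s + d*t"
      using D unfolding s_def t_def by (simp_all add: field_simps)
    show ?thesis
    proof (cases "t = 0")
      case True
      then have "a*b0 = a0*b" using D unfolding t_def by simp
      then obtain \<sigma> where "a = \<sigma>*a0" "b = \<sigma>*b0" using proportional_pair nz by blast
      then show ?thesis using hom[of \<sigma> a0 b0] root \<open>n > 0\<close> \<open>a*b0 = a0*b\<close> by (simp add: mult.commute)
    next
      case False
      have "a = t*(a0*(s/t) + c)" "b = t*(b0*(s/t) + d)"
        using ab False by (simp_all add: field_simps)
      then have "g a b = t^n * g c d" by (simp only: hom const)
      then show ?thesis unfolding t_def by (simp add: power_divide)
    qed
  qed
  then show ?thesis by blast
qed

definition tangent_C0 :: "pt \<Rightarrow> pt" where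
  "tangent_C0 q = (case q of (\<alpha>, \<beta>, \<gamma>) \<Rightarrow> (\<alpha>, \<beta>, -2*\<gamma>))"

lemma lform_tangent_C0: "lform (tangent_C0 (\<alpha>, \<beta>, \<gamma>)) (x, y, z) = \<alpha>*x + \<beta>*y - 2*\<gamma>*z"
  by (simp add: lform_def tangent_C0_def)

lemma lform_tangent_C0_self: "lform (tangent_C0 q) q = qform C0 q"
  by (cases q) (simp add: lform_tangent_C0 power2_eq_square)

(* x + iy = 2a^2, x - iy = b^2 and z = ab, so x^2 + y^2 = (x + iy)(x - iy) = 2z^2. *)
definition C0_param :: "complex \<Rightarrow> complex \<Rightarrow> pt" where
  "C0_param a b = ((2*a^2 + b^2)/2, -\<i>*(2*a^2 - b^2)/2, a*b)"

lemma qform_C0_param: "qform C0 (C0_param a b) = 0"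
  by (simp add: C0_param_def field_simps power2_eq_square)

lemma C0_param_eq_0_iff: "C0_param a b = (0, 0, 0) \<longleftrightarrow> a = 0 \<and> b = 0"
proof
  assume "C0_param a b = (0, 0, 0)"
  then have "2*a^2 + b^2 = 0" "2*a^2 - b^2 = 0" by (auto simp: C0_param_def)
  then have "a^2 = 0" "b^2 = 0" by (auto simp: algebra_simps)
  then show "a = 0 \<and> b = 0" by simp
qed (simp add: C0_param_def)

lemma C0_param_surj:
  assumes "qform C0 (x, y, z) = 0"
  obtains a b where "(x, y, z) = C0_param a b"
proof -
  define u where "u = x + \<i>*y"
  define w where "w = x - \<i>*y"
  have uw: "u*w = 2*z^2" using assms unfolding u_def w_def by (simp add: algebra_simps power2_eq_square)
  have xy: "x = (u + w)/2" "y = -\<i>*(u - w)/2" unfolding u_def w_def by (auto simp: field_simps)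
  show ?thesis
  proof (cases "u = 0")
    case True
    then have "z = 0" using uw by simp
    then show ?thesis using that[of 0 "csqrt w"] by (simp add: C0_param_def xy True)
  next
    case False
    define a where "a = csqrt (u/2)"
    have a: "u = 2*a^2" "a \<noteq> 0" using False by (simp_all add: a_def)
    have "(z/a)^2 = w" using uw a by (simp add: field_simps power2_eq_square)
    then have "(x, y, z) = C0_param a (z/a)" using a by (simp add: C0_param_def xy field_simps)
    then show ?thesis by (rule that)
  qed
qed

lemma C0_param_scale:
  assumes "C0_param a b = (x, y, z)"
  shows "C0_param (k*a) (k*b) = (k^2*x, k^2*y, k^2*z)"
proof -
  have "x = (2*a^2 + b^2)/2" "y = -\<i>*(2*a^2 - b^2)/2" "z = a*b"
    using assms by (auto simp: C0_param_def)
  then show ?thesis unfolding C0_param_def by (simp only:) (simp add: power2_eq_square field_simps)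
qed

lemma qform_C0_param_scale: "qform Q (C0_param (k*a) (k*b)) = k^4 * qform Q (C0_param a b)"
proof -
  obtain x y z where p: "C0_param a b = (x, y, z)" by (cases "C0_param a b")
  show ?thesis using C0_param_scale[OF p, of k] qform_scale[of Q "k^2"] by (simp add: p power_mult)
qed

lemma lform_tangent_C0_param: "lform (tangent_C0 (C0_param a0 b0)) (C0_param a b) = (b0*a - a0*b)^2"
  by (simp add: C0_param_def lform_tangent_C0 field_simps power2_eq_square)

lemma C0_inter_tangent_C0:
  assumes q: "q \<noteq> (0, 0, 0)" "qform C0 q = 0" and p: "p \<noteq> (0, 0, 0)"
  shows "(qform C0 p = 0 \<and> lform (tangent_C0 q) p = 0) \<longleftrightarrow> pt_eq q p"
proof
  assume on_tangent: "qform C0 p = 0 \<and> lform (tangent_C0 q) p = 0"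
  obtain a0 b0 where q_param: "q = C0_param a0 b0" using q C0_param_surj by (cases q) metis
  obtain a b where p_param: "p = C0_param a b" using on_tangent C0_param_surj by (cases p) metis
  have "(b0*a - a0*b)^2 = 0" using on_tangent by (simp add: q_param p_param lform_tangent_C0_param)
  then have "a*b0 = a0*b" by (simp add: mult.commute)
  moreover have "(a0, b0) \<noteq> (0, 0)" using q q_param by (auto simp: C0_param_eq_0_iff)
  ultimately obtain \<sigma> where "a = \<sigma>*a0" "b = \<sigma>*b0" using proportional_pair by blast
  moreover obtain \<alpha> \<beta> \<gamma> where "q = (\<alpha>, \<beta>, \<gamma>)" by (cases q)
  ultimately have p_scaled: "p = (\<sigma>^2*\<alpha>, \<sigma>^2*\<beta>, \<sigma>^2*\<gamma>)"
    using C0_param_scale q_param p_param by metis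
  then have "\<sigma> \<noteq> 0" using p by auto
  then show "pt_eq q p"
    unfolding pt_eq_def using \<open>q = (\<alpha>, \<beta>, \<gamma>)\<close> p_scaled by (intro exI[of _ "\<sigma>^2"]) simp
next
  assume "pt_eq q p"
  then obtain t \<alpha> \<beta> \<gamma> where "q = (\<alpha>, \<beta>, \<gamma>)" "p = (t*\<alpha>, t*\<beta>, t*\<gamma>)"
    unfolding pt_eq_def by (cases q) auto
  then show "qform C0 p = 0 \<and> lform (tangent_C0 q) p = 0"
    using q lform_tangent_C0_self[of q] by (simp only: qform_scale lform_scale) simp
qed

lemma qform_C0_param_along_line: "\<exists>P. \<forall>u. poly P u = qform Q (C0_param (a0*u + c) (b0*u + d))"
proof -
  obtain A B C D E F where Q: "Q = (A, B, C, D, E, F)" by (metis prod_cases6)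
  define pa where "pa = [:c, a0:]"
  define pb where "pb = [:d, b0:]"
  define px where "px = smult (1/2) (smult 2 (pa*pa) + pb*pb)"
  define py where "py = smult (-\<i>/2) (smult 2 (pa*pa) - pb*pb)"
  define pz where "pz = pa*pb"
  define P where "P = smult A (px*px) + smult B (py*py) + smult C (pz*pz)
    + smult D (px*py) + smult E (px*pz) + smult F (py*pz)"
  have pa: "poly pa u = a0*u + c" and pb: "poly pb u = b0*u + d" for u
    unfolding pa_def pb_def by simp_all
  have "poly P u = qform Q (C0_param (a0*u + c) (b0*u + d))" for u
    unfolding P_def px_def py_def pz_def Q qform_def C0_param_def
    by (simp only: poly_add poly_mult poly_smult poly_diff prod.case pa pb power2_eq_square)
      (simp add: field_simps)
  then show ?thesis by blast
qed

lemma meets_C0_only_at_imp_tangent_square: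
  assumes meets: "meets_C0_only_at Q q" and q: "q \<noteq> (0, 0, 0)" "qform C0 q = 0"
  obtains m where "\<And>p. qform C0 p = 0 \<Longrightarrow> qform Q p = m * (lform (tangent_C0 q) p)^2"
proof -
  obtain a0 b0 where q_param: "q = C0_param a0 b0" using q C0_param_surj by (cases q) metis
  have a0b0: "(a0, b0) \<noteq> (0, 0)" using q q_param by (auto simp: C0_param_eq_0_iff)
  have roots: "a*b0 = a0*b" if "qform Q (C0_param a b) = 0" "(a, b) \<noteq> (0, 0)" for a b
  proof -
    have "C0_param a b \<noteq> (0, 0, 0)" using that by (simp add: C0_param_eq_0_iff)
    then have "pt_eq q (C0_param a b)"
      using meets that(1) qform_C0_param unfolding meets_C0_only_at_def by blast
    then have "(b0*a - a0*b)^2 = 0"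
      using C0_inter_tangent_C0 q lform_tangent_C0_param q_param \<open>C0_param a b \<noteq> (0, 0, 0)\<close> by metis
    then show ?thesis by (simp add: mult.commute)
  qed
  have "qform Q q = 0" using meets q pt_eq_refl unfolding meets_C0_only_at_def by blast
  then obtain e where e: "\<And>a b. qform Q (C0_param a b) = e * (a0*b - b0*a)^4"
    using binary_form_with_single_root[where g = "\<lambda>a b. qform Q (C0_param a b)", of 4 a0 b0]
      qform_C0_param_scale qform_C0_param_along_line roots a0b0 q_param by auto
  show ?thesis
  proof (rule that[of e])
    fix p assume "qform C0 p = 0"
    then obtain a b where "p = C0_param a b" using C0_param_surj by (cases p) metis
    moreover have "(a0*b - b0*a)^4 = ((b0*a - a0*b)^2)^2" by algebra
    ultimately show "qform Q p = e * (lform (tangent_C0 q) p)^2"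
      by (simp add: e q_param lform_tangent_C0_param)
  qed
qed

lemma qform_vanishing_on_C0:
  assumes van: "\<And>p. qform C0 p = 0 \<Longrightarrow> qform (a, b, c, d, e, f) p = 0"
  shows "b = a \<and> c = -2*a \<and> d = 0 \<and> e = 0 \<and> f = 0"
proof -
  have "a+b+c+d+e+f = 0" "a+b+c+d-e-f = 0" "a+b+c-d+e-f = 0" "a+b+c-d-e+f = 0" "a-b+d*\<i> = 0"
    using van[of "(1,1,1)"] van[of "(1,1,-1)"] van[of "(1,-1,1)"] van[of "(-1,1,1)"] van[of "(1,\<i>,0)"]
    by (simp_all add: qform_def C0_def power2_eq_square)
  then show ?thesis by algebra
qed

lemma tangent_square_imp_meets_C0_only_at:
  assumes q: "q \<noteq> (0, 0, 0)" "qform C0 q = 0" and "m \<noteq> 0"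
    and on_C0: "\<And>p. qform C0 p = 0 \<Longrightarrow> qform Q p = m * (lform (tangent_C0 q) p)^2"
  shows "meets_C0_only_at Q q"
  unfolding meets_C0_only_at_def
proof (intro allI impI)
  fix p :: pt assume "p \<noteq> (0, 0, 0)"
  then show "(qform Q p = 0 \<and> qform C0 p = 0) \<longleftrightarrow> pt_eq q p"
    using C0_inter_tangent_C0[OF q \<open>p \<noteq> (0, 0, 0)\<close>] on_C0[of p] \<open>m \<noteq> 0\<close> by auto
qed

lemma qform_on_H0: "qform (A, B, C, D, E, F) (x, y, y) = A*x^2 + (D + E)*x*y + (B + C + F)*y^2"
  unfolding qform_def by (simp add: power2_eq_square algebra_simps)

lemma meets_H0_exactly_at_proportional:
  assumes "meets_H0_exactly_at Q r"
    and "(x1, y1, y1) \<noteq> (0, 0, 0)" "qform Q (x1, y1, y1) = 0"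
    and "(x2, y2, y2) \<noteq> (0, 0, 0)" "qform Q (x2, y2, y2) = 0"
  shows "x1*y2 = x2*y1"
proof -
  obtain r1 r2 r3 where r: "r = (r1, r2, r3)" by (cases r)
  from assms have "pt_eq r (x1, y1, y1)" "pt_eq r (x2, y2, y2)"
    unfolding meets_H0_exactly_at_def by auto
  then obtain t1 t2 where "x1 = t1*r1" "y1 = t1*r2" "x2 = t2*r1" "y2 = t2*r2"
    unfolding pt_eq_def r by auto
  then show ?thesis by (simp add: algebra_simps)
qed

lemma meets_H0_exactly_at_not_contains_H0:
  assumes "meets_H0_exactly_at Q r"
  shows "\<not> contains_H0 Q"
proof
  assume "contains_H0 Q"
  then have "qform Q (1, 0, 0) = 0" "qform Q (0, 1, 1) = 0" unfolding contains_H0_def by auto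
  then have "(1::complex)*1 = 0*0" using meets_H0_exactly_at_proportional[OF assms, of 1 0 0 1] by simp
  then show False by simp
qed

lemma meets_H0_exactly_at_discriminant:
  assumes meets: "meets_H0_exactly_at (A, B, C, D, E, F) r"
  shows "(D + E)^2 = 4*A*(B + C + F)"
proof (rule ccontr)
  define a b c where "a = A" and "b = D + E" and "c = B + C + F"
  assume "(D + E)^2 \<noteq> 4*A*(B + C + F)"
  then have disc: "b^2 - 4*a*c \<noteq> 0" by (simp add: a_def b_def c_def)
  have on_H0: "qform (A, B, C, D, E, F) (x, y, y) = a*x^2 + b*x*y + c*y^2" for x y
    unfolding a_def b_def c_def by (rule qform_on_H0)
  show False
  proof (cases "a = 0")
    case True
    then have "b \<noteq> 0" using disc by simp
    have "1*b = (-c)*0"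
      by (rule meets_H0_exactly_at_proportional[OF meets]) (auto simp: on_H0 True \<open>b \<noteq> 0\<close> power2_eq_square)
    then show False using \<open>b \<noteq> 0\<close> by simp
  next
    case False
    define s where "s = csqrt (b^2 - 4*a*c)"
    have root: "qform (A, B, C, D, E, F) ((-b + k)/(2*a), 1, 1) = 0" if "k^2 = b^2 - 4*a*c" for k
      unfolding on_H0 using False that by (simp add: field_simps power2_eq_square) algebra
    have "qform (A, B, C, D, E, F) ((-b + s)/(2*a), 1, 1) = 0"
      and "qform (A, B, C, D, E, F) ((-b + -s)/(2*a), 1, 1) = 0"
      by (rule root, simp add: s_def)+
    then have "(-b + s)/(2*a) * 1 = (-b + -s)/(2*a) * 1"
      by (intro meets_H0_exactly_at_proportional[OF meets]) simp_all
    then have "s = 0" using False by (simp add: field_simps)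
    then show False using disc s_def by simp
  qed
qed

lemma square_meets_H0_exactly_at:
  assumes "t \<noteq> 0" and uv: "(u, v) \<noteq> (0, 0)" and on_H0: "\<And>x y. qform Q (x, y, y) = t*(v*x - u*y)^2"
  shows "meets_H0_exactly_at Q (u, v, v)"
  unfolding meets_H0_exactly_at_def
proof (intro conjI allI impI)
  show "(u, v, v) \<noteq> (0, 0, 0)" using uv by auto
  fix p :: pt assume "p \<noteq> (0, 0, 0)"
  obtain x y z where p: "p = (x, y, z)" by (cases p)
  show "(qform Q p = 0 \<and> lform H0 p = 0) \<longleftrightarrow> pt_eq (u, v, v) p"
  proof
    assume "qform Q p = 0 \<and> lform H0 p = 0"
    then have z: "z = y" and line: "v*x = u*y" using on_H0[of x y] \<open>t \<noteq> 0\<close> by (auto simp: p)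
    show "pt_eq (u, v, v) p"
    proof (cases "v = 0")
      case False
      then have "y \<noteq> 0" using \<open>p \<noteq> (0, 0, 0)\<close> p z line by auto
      with False show ?thesis unfolding pt_eq_def p using line z
        by (intro exI[of _ "y/v"]) (auto simp: field_simps)
    next
      case True
      then have "u \<noteq> 0" "y = 0" using uv line by auto
      then have "x \<noteq> 0" using \<open>p \<noteq> (0, 0, 0)\<close> p z by auto
      then show ?thesis unfolding pt_eq_def p using True \<open>u \<noteq> 0\<close> \<open>y = 0\<close> z
        by (intro exI[of _ "x/u"]) auto
    qed
  next
    assume "pt_eq (u, v, v) p"
    then obtain s where "p = (s*u, s*v, s*v)" unfolding pt_eq_def by auto
    then show "qform Q p = 0 \<and> lform H0 p = 0" using on_H0 by (simp add: algebra_simps)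
  qed
qed

lemma qform_tangent_square:
  "qform (\<alpha>^2, \<beta>^2, 4*\<gamma>^2, 2*\<alpha>*\<beta>, -4*\<alpha>*\<gamma>, -4*\<beta>*\<gamma>) p = (lform (tangent_C0 (\<alpha>, \<beta>, \<gamma>)) p)^2"
  by (cases p) (simp add: qform_def lform_tangent_C0 power2_eq_square algebra_simps)

lemma qform_Cq411:
  assumes "qform C0 (\<alpha>, \<beta>, \<gamma>) = 0"
  shows "qform ((\<beta> - 2*\<gamma>)^2, 3*\<beta>^2 - 4*\<beta>*\<gamma> + 2*\<gamma>^2, 4*\<beta>*(2*\<gamma> - \<beta>), 2*\<alpha>*\<beta>, -4*\<alpha>*\<gamma>, -4*\<beta>*\<gamma>) p
    = (lform (tangent_C0 (\<alpha>, \<beta>, \<gamma>)) p)^2 + 2*(\<beta> - \<gamma>)^2 * qform C0 p"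
proof -
  obtain x y z where p: "p = (x, y, z)" by (cases p)
  have "\<alpha>^2 = 2*\<gamma>^2 - \<beta>^2" using assms by (simp add: algebra_simps)
  then show ?thesis unfolding p qform_def C0_def lform_tangent_C0 prod.case by algebra
qed

lemma meets_C0_only_at_imp_pencil:
  assumes "meets_C0_only_at Q (\<alpha>, \<beta>, \<gamma>)" "(\<alpha>, \<beta>, \<gamma>) \<noteq> (0, 0, 0)" "qform C0 (\<alpha>, \<beta>, \<gamma>) = 0"
  obtains l m where
    "Q = (m*\<alpha>^2 + l, m*\<beta>^2 + l, m*(4*\<gamma>^2) - 2*l, m*(2*\<alpha>*\<beta>), m*(-4*\<alpha>*\<gamma>), m*(-4*\<beta>*\<gamma>))"
proof -
  obtain A B C D E F where Q: "Q = (A, B, C, D, E, F)" by (metis prod_cases6)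
  obtain m where m: "\<And>p. qform C0 p = 0 \<Longrightarrow> qform Q p = m * (lform (tangent_C0 (\<alpha>, \<beta>, \<gamma>)) p)^2"
    using meets_C0_only_at_imp_tangent_square assms by blast
  have "qform (A - m*\<alpha>^2, B - m*\<beta>^2, C - m*(4*\<gamma>^2), D - m*(2*\<alpha>*\<beta>), E - m*(-4*\<alpha>*\<gamma>),
      F - m*(-4*\<beta>*\<gamma>)) p = 0" if "qform C0 p = 0" for p
    unfolding qform_diff qform_smult qform_tangent_square using m[OF that] Q by simp
  from qform_vanishing_on_C0[OF this] show ?thesis
    by (intro that[of m "A - m*\<alpha>^2"]) (auto simp: Q algebra_simps eq_neg_iff_add_eq_0)
qed

lemma pencil_meets_H0_exactly_at:
  assumes "qform C0 (\<alpha>, \<beta>, \<gamma>) = 0"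
    and "meets_H0_exactly_at
      (m*\<alpha>^2 + l, m*\<beta>^2 + l, m*(4*\<gamma>^2) - 2*l, m*(2*\<alpha>*\<beta>), m*(-4*\<alpha>*\<gamma>), m*(-4*\<beta>*\<gamma>)) r"
  shows "l = 0 \<or> l = 2*m*(\<beta> - \<gamma>)^2"
proof -
  have "\<alpha>^2 = 2*\<gamma>^2 - \<beta>^2" using assms(1) by (simp add: algebra_simps)
  moreover note meets_H0_exactly_at_discriminant[OF assms(2)]
  ultimately have "l*(l - 2*m*(\<beta> - \<gamma>)^2) = 0" by algebra
  then show ?thesis by simp
qed

lemma conic_eq_meets_C0_and_H0:
  assumes q: "q \<noteq> (0, 0, 0)" "qform C0 q = 0" and uv: "(u, v) \<noteq> (0, 0)"
    and on_C0: "\<And>p. qform C0 p = 0 \<Longrightarrow> qform Q0 p = (lform (tangent_C0 q) p)^2"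
    and on_H0: "\<And>x y. qform Q0 (x, y, y) = (v*x - u*y)^2"
    and "conic_eq Q0 Q"
  shows "meets_C0_only_at Q q \<and> meets_H0_exactly_at Q (u, v, v) \<and> \<not> contains_H0 Q"
proof -
  obtain t where "t \<noteq> 0" and scaled: "\<And>p. qform Q p = t * qform Q0 p"
    using \<open>conic_eq Q0 Q\<close> unfolding conic_eq_def by (cases Q0) (auto simp: qform_smult)
  have "meets_C0_only_at Q q"
    using tangent_square_imp_meets_C0_only_at[OF q \<open>t \<noteq> 0\<close>] on_C0 scaled by simp
  moreover have "meets_H0_exactly_at Q (u, v, v)"
    using square_meets_H0_exactly_at[OF \<open>t \<noteq> 0\<close> uv] on_H0 scaled by simp
  ultimately show ?thesis using meets_H0_exactly_at_not_contains_H0 by blast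
qed

lemma conic_eq_double_tangent:
  assumes q: "(\<alpha>, \<beta>, \<gamma>) \<noteq> (0, 0, 0)" "qform C0 (\<alpha>, \<beta>, \<gamma>) = 0"
    and "conic_eq (\<alpha>^2, \<beta>^2, 4*\<gamma>^2, 2*\<alpha>*\<beta>, -4*\<alpha>*\<gamma>, -4*\<beta>*\<gamma>) Q"
  shows "meets_C0_only_at Q (\<alpha>, \<beta>, \<gamma>) \<and> meets_H0_exactly_at Q (2*\<gamma> - \<beta>, \<alpha>, \<alpha>) \<and> \<not> contains_H0 Q"
proof (rule conic_eq_meets_C0_and_H0[OF q _ qform_tangent_square _ assms(3)])
  have "\<alpha>^2 = 2*\<gamma>^2 - \<beta>^2" using q(2) by (simp add: algebra_simps)
  then show "(2*\<gamma> - \<beta>, \<alpha>) \<noteq> (0, 0)" using q(1) by (auto simp: power2_eq_square)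
  show "qform (\<alpha>^2, \<beta>^2, 4*\<gamma>^2, 2*\<alpha>*\<beta>, -4*\<alpha>*\<gamma>, -4*\<beta>*\<gamma>) (x, y, y) = (\<alpha>*x - (2*\<gamma> - \<beta>)*y)^2"
    for x y unfolding qform_on_H0 by (simp add: power2_eq_square algebra_simps)
qed

lemma conic_eq_Cq411:
  assumes q: "(\<alpha>, \<beta>, \<gamma>) \<noteq> (0, 0, 0)" "qform C0 (\<alpha>, \<beta>, \<gamma>) = 0"
    and "conic_eq ((\<beta> - 2*\<gamma>)^2, 3*\<beta>^2 - 4*\<beta>*\<gamma> + 2*\<gamma>^2, 4*\<beta>*(2*\<gamma> - \<beta>),
      2*\<alpha>*\<beta>, -4*\<alpha>*\<gamma>, -4*\<beta>*\<gamma>) Q"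
  shows "meets_C0_only_at Q (\<alpha>, \<beta>, \<gamma>) \<and> meets_H0_exactly_at Q (\<alpha>, 2*\<gamma> - \<beta>, 2*\<gamma> - \<beta>)
    \<and> \<not> contains_H0 Q"
proof (rule conic_eq_meets_C0_and_H0[OF q _ _ _ assms(3)])
  have rel: "\<alpha>^2 = 2*\<gamma>^2 - \<beta>^2" using q(2) by (simp add: algebra_simps)
  then show "(\<alpha>, 2*\<gamma> - \<beta>) \<noteq> (0, 0)" using q(1) by (auto simp: power2_eq_square)
  show "qform ((\<beta> - 2*\<gamma>)^2, 3*\<beta>^2 - 4*\<beta>*\<gamma> + 2*\<gamma>^2, 4*\<beta>*(2*\<gamma> - \<beta>),
      2*\<alpha>*\<beta>, -4*\<alpha>*\<gamma>, -4*\<beta>*\<gamma>) p = (lform (tangent_C0 (\<alpha>, \<beta>, \<gamma>)) p)^2"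
    if "qform C0 p = 0" for p unfolding qform_Cq411[OF q(2)] using that by simp
  show "qform ((\<beta> - 2*\<gamma>)^2, 3*\<beta>^2 - 4*\<beta>*\<gamma> + 2*\<gamma>^2, 4*\<beta>*(2*\<gamma> - \<beta>),
      2*\<alpha>*\<beta>, -4*\<alpha>*\<gamma>, -4*\<beta>*\<gamma>) (x, y, y) = ((2*\<gamma> - \<beta>)*x - \<alpha>*y)^2"
    for x y unfolding qform_on_H0 using rel by algebra
qed

lemma conic_meeting_C0_and_H0_once:
  assumes q: "(\<alpha>, \<beta>, \<gamma>) \<noteq> (0, 0, 0)" "qform C0 (\<alpha>, \<beta>, \<gamma>) = 0"
    and "Q \<noteq> (0, 0, 0, 0, 0, 0)" "meets_C0_only_at Q (\<alpha>, \<beta>, \<gamma>)" "meets_H0_exactly_at Q r"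
  shows "conic_eq (\<alpha>^2, \<beta>^2, 4*\<gamma>^2, 2*\<alpha>*\<beta>, -4*\<alpha>*\<gamma>, -4*\<beta>*\<gamma>) Q
    \<or> conic_eq ((\<beta> - 2*\<gamma>)^2, 3*\<beta>^2 - 4*\<beta>*\<gamma> + 2*\<gamma>^2, 4*\<beta>*(2*\<gamma> - \<beta>),
      2*\<alpha>*\<beta>, -4*\<alpha>*\<gamma>, -4*\<beta>*\<gamma>) Q"
proof -
  obtain l m where Q: "Q = (m*\<alpha>^2 + l, m*\<beta>^2 + l, m*(4*\<gamma>^2) - 2*l,
      m*(2*\<alpha>*\<beta>), m*(-4*\<alpha>*\<gamma>), m*(-4*\<beta>*\<gamma>))"
    using meets_C0_only_at_imp_pencil[OF assms(4) q] .
  with assms(5) have "l = 0 \<or> l = 2*m*(\<beta> - \<gamma>)^2"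
    using pencil_meets_H0_exactly_at[OF q(2)] by blast
  moreover from this have "m \<noteq> 0" using \<open>Q \<noteq> (0, 0, 0, 0, 0, 0)\<close> Q by auto
  ultimately show ?thesis
  proof (elim disjE)
    assume "l = 0"
    then show ?thesis unfolding conic_eq_def Q using \<open>m \<noteq> 0\<close> by (intro disjI1 exI[of _ m]) simp
  next
    assume l: "l = 2*m*(\<beta> - \<gamma>)^2"
    have rel: "\<alpha>^2 = 2*\<gamma>^2 - \<beta>^2" using q(2) by (simp add: algebra_simps)
    have "Q = (m*(\<beta> - 2*\<gamma>)^2, m*(3*\<beta>^2 - 4*\<beta>*\<gamma> + 2*\<gamma>^2), m*(4*\<beta>*(2*\<gamma> - \<beta>)),
        m*(2*\<alpha>*\<beta>), m*(-4*\<alpha>*\<gamma>), m*(-4*\<beta>*\<gamma>))"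
      unfolding Q l prod.inject rel by (simp add: power2_eq_square algebra_simps)
    then show ?thesis unfolding conic_eq_def using \<open>m \<noteq> 0\<close> by (intro disjI2 exI[of _ m]) simp
  qed
qed

theorem lemmaB7:
  fixes \<alpha> \<beta> \<gamma> :: complex
  assumes q_nz: "(\<alpha>, \<beta>, \<gamma>) \<noteq> (0, 0, 0)"
    and q_on_C0: "qform C0 (\<alpha>, \<beta>, \<gamma>) = 0"
    and q_notin_H0: "\<beta> \<noteq> \<gamma>"
  defines "Hq2 \<equiv> (\<alpha>^2, \<beta>^2, 4*\<gamma>^2, 2*\<alpha>*\<beta>, -4*\<alpha>*\<gamma>, -4*\<beta>*\<gamma>) :: conic"
    and "Cq \<equiv> ((\<beta> - 2*\<gamma>)^2, 3*\<beta>^2 - 4*\<beta>*\<gamma> + 2*\<gamma>^2, 4*\<beta>*(2*\<gamma> - \<beta>),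
              2*\<alpha>*\<beta>, -4*\<alpha>*\<gamma>, -4*\<beta>*\<gamma>) :: conic"
  shows "(\<forall>Q :: conic. Q \<noteq> (0,0,0,0,0,0) \<longrightarrow>
            ((meets_C0_only_at Q (\<alpha>, \<beta>, \<gamma>) \<and> (\<exists>r. meets_H0_exactly_at Q r) \<and> \<not> contains_H0 Q)
             \<longleftrightarrow> (conic_eq Hq2 Q \<or> conic_eq Cq Q)))
       \<and> meets_H0_exactly_at Hq2 (2*\<gamma> - \<beta>, \<alpha>, \<alpha>)
       \<and> meets_H0_exactly_at Cq (\<alpha>, 2*\<gamma> - \<beta>, 2*\<gamma> - \<beta>)"
proof -
  note double_tangent = conic_eq_double_tangent[OF q_nz q_on_C0, folded Hq2_def]
   and Cq411 = conic_eq_Cq411[OF q_nz q_on_C0, folded Cq_def]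
  have "conic_eq Hq2 Q \<or> conic_eq Cq Q"
    if "Q \<noteq> (0, 0, 0, 0, 0, 0)" "meets_C0_only_at Q (\<alpha>, \<beta>, \<gamma>)" "meets_H0_exactly_at Q r" for Q r
    using conic_meeting_C0_and_H0_once[OF q_nz q_on_C0 that] unfolding Hq2_def Cq_def .
  then show ?thesis using double_tangent Cq411 conic_eq_refl by blast
qed

end
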